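(* Let $\{X_k\}_{k\ge0}$ and $\{Y_k\}_{k\ge0}$ be sequences of vectors in $\mathbb{R}^2$ with non-negative entries, and $\{M_k\}_{k\ge0}$ a sequence of $2\times2$ matrices, satisfying $X_{k+1}\le M_kX_k+Y_k$ (componentwise) for all $k\ge0$. Suppose $\sum_{k=0}^\infty\|Y_k\|<\infty$ and $$M_k=\begin{pmatrix}1&r\\ \alpha_k&\alpha_k\end{pmatrix}$$ for some fixed $r>0$ and non-negative reals $\alpha_k$ with $\sum_{k=0}^\infty\alpha_k<\infty$. Then: (1) the matrices $M_bM_{b-1}\cdots M_a$ are uniformly bounded over $0\le a<b<\infty$; (2) $\{X_k\}_{k\ge0}$ is uniformly bounded. *)

theory Defs
  imports "HOL-Analysis.Analysis"
begin

text \<open>Ordered matrix product: prodM M a b = M b ** M (b-1) ** ... ** M a for a \<le> b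
  (and the identity matrix when b < a).\<close>
fun prodM :: "(nat \<Rightarrow> real^2^2) \<Rightarrow> nat \<Rightarrow> nat \<Rightarrow> real^2^2" where
  "prodM M a 0 = (if a = 0 then M 0 else mat 1)"
| "prodM M a (Suc b) = (if a \<le> Suc b then (if a = Suc b then M (Suc b) else M (Suc b) ** prodM M a b) else mat 1)"

definition vle :: "real^2 \<Rightarrow> real^2 \<Rightarrow> bool" where
  "vle x y \<longleftrightarrow> (\<forall>i. x $ i \<le> y $ i)"

end

theory Submission
  imports Defs
begin

text \<open>The weighted sum weight r x = x1 + r x2 is a Lyapunov function: the row vector
  (1, r) satisfies (1, r) M_k = (1, r) + r alpha_k (1, 1).  On the cone of non-negative
  vectors, which every M_k preserves, it is equivalent to the norm and grows by at most the
  factor 1 + max 1 r alpha_k \<le> exp (max 1 r alpha_k) per step.  Summability of alpha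
  therefore bounds every product of the M_k applied to a basis vector, and a discrete
  Gronwall inequality, fed with the summable perturbations Y_k, bounds X_k.\<close>

definition weight :: "real \<Rightarrow> real^2 \<Rightarrow> real" where
  "weight r x = x $ 1 + r * x $ 2"

definition mat_M :: "real \<Rightarrow> real \<Rightarrow> real^2^2" where
  "mat_M r a = vector [vector [1, r], vector [a, a]]"

lemma vle_zero_iff: "vle 0 x \<longleftrightarrow> 0 \<le> x $ 1 \<and> 0 \<le> x $ 2"
  by (simp add: vle_def forall_2)

lemma weight_add: "weight r (x + y) = weight r x + weight r y"
  by (simp add: weight_def algebra_simps)

lemma weight_mono: "0 \<le> r \<Longrightarrow> vle x y \<Longrightarrow> weight r x \<le> weight r y"
  unfolding weight_def vle_def by (intro add_mono mult_left_mono) auto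

lemma weight_nonneg: "0 \<le> r \<Longrightarrow> vle 0 x \<Longrightarrow> 0 \<le> weight r x"
  using weight_mono[of r 0 x] by (simp add: weight_def)

lemma weight_le_norm: "0 \<le> r \<Longrightarrow> weight r x \<le> (1 + r) * norm x"
proof -
  assume "0 \<le> r"
  have "x $ 1 \<le> norm x" "x $ 2 \<le> norm x"
    using component_le_norm_cart[of x] by (metis abs_ge_self order_trans)+
  moreover have "r * x $ 2 \<le> r * norm x"
    using \<open>x $ 2 \<le> norm x\<close> \<open>0 \<le> r\<close> by (rule mult_left_mono)
  ultimately show ?thesis by (simp add: weight_def algebra_simps)
qed

lemma entry_sum_le_weight:
  assumes "0 < r" "vle 0 x"
  shows "x $ 1 + x $ 2 \<le> (1 + 1 / r) * weight r x"
proof -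
  have "x $ 2 = (r * x $ 2) / r" using \<open>0 < r\<close> by simp
  also have "\<dots> \<le> weight r x / r"
    using assms by (intro divide_right_mono) (auto simp: weight_def vle_zero_iff)
  finally show ?thesis
    using assms by (simp add: weight_def vle_zero_iff algebra_simps)
qed

lemma norm_le_weight:
  assumes "0 < r" "vle 0 x"
  shows "norm x \<le> (1 + 1 / r) * weight r x"
proof -
  have "norm x \<le> \<bar>x $ 1\<bar> + \<bar>x $ 2\<bar>"
    using norm_le_l1_cart[of x] by (simp add: sum_2)
  also have "\<dots> = x $ 1 + x $ 2" using \<open>vle 0 x\<close> by (simp add: vle_zero_iff)
  finally show ?thesis using entry_sum_le_weight[OF assms] by linarith
qed

lemma weight_axis_le: "weight r (axis j 1) \<le> max 1 r"
  using exhaust_2[of j] by (auto simp: weight_def axis_def)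

lemma mat_M_mult_vec:
  "mat_M r a *v x = vector [x $ 1 + r * x $ 2, a * x $ 1 + a * x $ 2]"
  by (simp add: mat_M_def matrix_vector_mult_def sum_2 vec_eq_iff forall_2)

lemma mat_M_cone:
  "0 \<le> r \<Longrightarrow> 0 \<le> a \<Longrightarrow> vle 0 x \<Longrightarrow> vle 0 (mat_M r a *v x)"
  by (simp add: mat_M_mult_vec vle_zero_iff)

lemma weight_mat_M_le:
  assumes "0 \<le> r" "0 \<le> a" "vle 0 x"
  shows "weight r (mat_M r a *v x) \<le> (1 + max 1 r * a) * weight r x"
proof -
  have "weight r (mat_M r a *v x) = weight r x + a * (r * (x $ 1 + x $ 2))"
    by (simp add: weight_def mat_M_mult_vec algebra_simps)
  also have "r * (x $ 1 + x $ 2) \<le> max 1 r * weight r x"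
  proof -
    have "r * x $ 1 \<le> max 1 r * x $ 1"
      using assms by (auto simp: vle_zero_iff intro!: mult_right_mono)
    moreover have "r * x $ 2 \<le> max 1 r * (r * x $ 2)"
      using mult_right_mono[of 1 "max 1 r" "r * x $ 2"] assms by (simp add: vle_zero_iff)
    ultimately show ?thesis by (simp add: weight_def distrib_left)
  qed
  then have "a * (r * (x $ 1 + x $ 2)) \<le> a * (max 1 r * weight r x)"
    using \<open>0 \<le> a\<close> by (rule mult_left_mono)
  finally show ?thesis by (simp add: algebra_simps)
qed

lemma prodM_self: "prodM M a a = M a"
  by (cases a) simp_all

lemma prodM_Suc: "a \<le> b \<Longrightarrow> prodM M a (Suc b) = M (Suc b) ** prodM M a b"
  by simp

lemma prodM_mult_vec_mem:
  assumes "\<And>k x. x \<in> K \<Longrightarrow> M k *v x \<in> K" "a \<le> b" "x \<in> K"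
  shows "prodM M a b *v x \<in> K"
  using \<open>a \<le> b\<close>
proof (induction b rule: dec_induct)
  case base
  then show ?case using assms by (simp add: prodM_self)
next
  case (step b)
  then show ?case using assms by (simp add: prodM_Suc matrix_vector_mul_assoc[symmetric])
qed

lemma prodM_mult_vec_le_exp:
  fixes V :: "real^2 \<Rightarrow> real"
  assumes cone: "\<And>k x. x \<in> K \<Longrightarrow> M k *v x \<in> K"
    and growth: "\<And>k x. x \<in> K \<Longrightarrow> V (M k *v x) \<le> (1 + c k) * V x"
    and V_nonneg: "\<And>x. x \<in> K \<Longrightarrow> 0 \<le> V x"
    and c_nonneg: "\<And>k. 0 \<le> c k"
    and "a \<le> b" "x \<in> K"
  shows "V (prodM M a b *v x) \<le> exp (\<Sum>k=a..b. c k) * V x"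
  using \<open>a \<le> b\<close>
proof (induction b rule: dec_induct)
  case base
  have "V (M a *v x) \<le> (1 + c a) * V x" using growth \<open>x \<in> K\<close> .
  also have "\<dots> \<le> exp (c a) * V x"
    using V_nonneg \<open>x \<in> K\<close> by (intro mult_right_mono) auto
  finally show ?case by (simp add: prodM_self)
next
  case (step b)
  define y where "y = prodM M a b *v x"
  have "y \<in> K" using prodM_mult_vec_mem[OF cone step.hyps(1) \<open>x \<in> K\<close>] by (simp add: y_def)
  have "V (M (Suc b) *v y) \<le> (1 + c (Suc b)) * V y" using growth \<open>y \<in> K\<close> .
  also have "\<dots> \<le> exp (c (Suc b)) * (exp (\<Sum>k=a..b. c k) * V x)"
    using step.IH c_nonneg V_nonneg \<open>y \<in> K\<close>
    by (intro mult_mono) (auto simp: y_def)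
  also have "\<dots> = exp (\<Sum>k=a..Suc b. c k) * V x"
    using step.hyps by (simp add: exp_add)
  finally show ?case
    using step.hyps by (simp add: y_def prodM_Suc matrix_vector_mul_assoc[symmetric])
qed

lemma discrete_gronwall:
  fixes u c d :: "nat \<Rightarrow> real"
  assumes rec: "\<And>k. u (Suc k) \<le> (1 + c k) * u k + d k"
    and c_nonneg: "\<And>k. 0 \<le> c k" and d_nonneg: "\<And>k. 0 \<le> d k" and "0 \<le> u 0"
  shows "u n \<le> exp (\<Sum>k<n. c k) * (u 0 + (\<Sum>k<n. d k))"
proof (induction n)
  case 0
  then show ?case by simp
next
  case (Suc n)
  define E where "E = exp (\<Sum>k<n. c k)"
  define R where "R = u 0 + (\<Sum>k<n. d k)"
  have "0 \<le> R" using \<open>0 \<le> u 0\<close> d_nonneg by (simp add: R_def sum_nonneg)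
  have "1 \<le> exp (c n) * E"
    using c_nonneg by (simp add: E_def sum_nonneg flip: exp_add)
  have "(1 + c n) * u n \<le> (1 + c n) * (E * R)"
    using Suc.IH c_nonneg[of n] unfolding E_def R_def by (intro mult_left_mono) auto
  then have "u (Suc n) \<le> (1 + c n) * (E * R) + d n"
    using rec[of n] by linarith
  also have "\<dots> \<le> exp (c n) * E * R + exp (c n) * E * d n"
  proof (rule add_mono)
    show "(1 + c n) * (E * R) \<le> exp (c n) * E * R"
      using mult_right_mono[OF exp_ge_add_one_self[of "c n"], of "E * R"] \<open>0 \<le> R\<close>
      by (simp add: E_def mult.assoc)
    show "d n \<le> exp (c n) * E * d n"
      using mult_right_mono[OF \<open>1 \<le> exp (c n) * E\<close> d_nonneg[of n]] by simp
  qed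
  also have "\<dots> = exp (\<Sum>k<Suc n. c k) * (u 0 + (\<Sum>k<Suc n. d k))"
    by (simp add: E_def R_def exp_add algebra_simps)
  finally show ?case .
qed

lemma norm_matrix_le_sum_abs:
  fixes A :: "real^'n^'m"
  shows "norm A \<le> (\<Sum>j\<in>UNIV. \<Sum>i\<in>UNIV. \<bar>A $ i $ j\<bar>)"
proof -
  have "norm A \<le> (\<Sum>i\<in>UNIV. norm (A $ i))"
    unfolding norm_vec_def by (rule L2_set_le_sum) simp
  also have "\<dots> \<le> (\<Sum>i\<in>UNIV. \<Sum>j\<in>UNIV. \<bar>A $ i $ j\<bar>)"
    by (intro sum_mono norm_le_l1_cart)
  also have "\<dots> = (\<Sum>j\<in>UNIV. \<Sum>i\<in>UNIV. \<bar>A $ i $ j\<bar>)" by (rule sum.swap)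
  finally show ?thesis .
qed

context
  fixes M :: "nat \<Rightarrow> real^2^2" and c :: "nat \<Rightarrow> real" and r :: real
  assumes r_pos: "0 < r"
    and cone: "\<And>k x. vle 0 x \<Longrightarrow> vle 0 (M k *v x)"
    and growth: "\<And>k x. vle 0 x \<Longrightarrow> weight r (M k *v x) \<le> (1 + c k) * weight r x"
    and c_nonneg: "\<And>k. 0 \<le> c k"
    and c_summable: "summable c"
begin

lemma prodM_bounded: "\<exists>C. \<forall>a b. a \<le> b \<longrightarrow> norm (prodM M a b) \<le> C"
proof (intro exI allI impI)
  fix a b :: nat
  assume "a \<le> b"
  define A where "A = prodM M a b"
  define B where "B = (1 + 1 / r) * (exp (suminf c) * max 1 r)"
  have column_bound: "(\<Sum>i\<in>UNIV. \<bar>A $ i $ j\<bar>) \<le> B" for j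
  proof -
    define y where "y = A *v axis j 1"
    have y_entry: "y $ i = A $ i $ j" for i
      by (simp add: y_def matrix_vector_mult_basis column_def)
    have "vle 0 (axis j (1::real))" by (simp add: vle_def axis_def)
    then have "vle 0 y"
      using prodM_mult_vec_mem[where K="{x. vle 0 x}"] cone \<open>a \<le> b\<close> by (simp add: y_def A_def)
    have "weight r y \<le> exp (\<Sum>k=a..b. c k) * weight r (axis j 1)"
      unfolding y_def A_def
      using prodM_mult_vec_le_exp[where K="{x. vle 0 x}" and V="weight r"] \<open>vle 0 (axis j 1)\<close>
        cone growth weight_nonneg r_pos c_nonneg \<open>a \<le> b\<close> by simp
    also have "\<dots> \<le> exp (suminf c) * max 1 r"
      using sum_le_suminf[OF c_summable, of "{a..b}"] c_nonneg weight_axis_le[of r j]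
        weight_nonneg[of r "axis j 1"] r_pos \<open>vle 0 (axis j 1)\<close>
      by (intro mult_mono) auto
    finally have "weight r y \<le> exp (suminf c) * max 1 r" .
    then have "(1 + 1 / r) * weight r y \<le> B"
      using r_pos unfolding B_def by (intro mult_left_mono) auto
    then have "y $ 1 + y $ 2 \<le> B"
      using entry_sum_le_weight[OF r_pos \<open>vle 0 y\<close>] by linarith
    then show ?thesis using \<open>vle 0 y\<close> by (simp add: sum_2 y_entry vle_zero_iff)
  qed
  have "norm A \<le> (\<Sum>j\<in>UNIV. \<Sum>i\<in>UNIV. \<bar>A $ i $ j\<bar>)" by (rule norm_matrix_le_sum_abs)
  also have "\<dots> \<le> 2 * B" using column_bound[of 1] column_bound[of 2] by (simp add: sum_2)
  finally show "norm (prodM M a b) \<le> 2 * B" by (simp add: A_def)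
qed

lemma perturbed_recursion_bounded:
  fixes X Y :: "nat \<Rightarrow> real^2"
  assumes X_nonneg: "\<And>k. vle 0 (X k)" and Y_nonneg: "\<And>k. vle 0 (Y k)"
    and rec: "\<And>k. vle (X (Suc k)) (M k *v X k + Y k)"
    and Y_summable: "summable (\<lambda>k. norm (Y k))"
  shows "\<exists>C. \<forall>k. norm (X k) \<le> C"
proof (intro exI allI)
  fix n
  define u where "u k = weight r (X k)" for k
  define S where "S = suminf (\<lambda>k. norm (Y k))"
  have u_step: "u (Suc k) \<le> (1 + c k) * u k + weight r (Y k)" for k
  proof -
    have "u (Suc k) \<le> weight r (M k *v X k + Y k)"
      unfolding u_def using r_pos rec[of k] by (intro weight_mono) auto
    also have "\<dots> = weight r (M k *v X k) + weight r (Y k)" by (rule weight_add)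
    also have "\<dots> \<le> (1 + c k) * u k + weight r (Y k)"
      unfolding u_def using growth[OF X_nonneg] by (rule add_right_mono)
    finally show ?thesis .
  qed
  have Y_weight_nonneg: "0 \<le> weight r (Y k)" for k
    using r_pos Y_nonneg by (simp add: weight_nonneg)
  have u0_nonneg: "0 \<le> u 0"
    using r_pos X_nonneg by (simp add: u_def weight_nonneg)
  have "u n \<le> exp (\<Sum>k<n. c k) * (u 0 + (\<Sum>k<n. weight r (Y k)))"
    using discrete_gronwall[where u = u and c = c and d = "\<lambda>k. weight r (Y k)"]
      u_step c_nonneg Y_weight_nonneg u0_nonneg by blast
  also have "\<dots> \<le> exp (suminf c) * (u 0 + (1 + r) * S)"
  proof -
    have exp_bound: "exp (\<Sum>k<n. c k) \<le> exp (suminf c)"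
      using sum_le_suminf[OF c_summable, of "{..<n}"] c_nonneg by simp
    have "(\<Sum>k<n. weight r (Y k)) \<le> (\<Sum>k<n. (1 + r) * norm (Y k))"
      using weight_le_norm r_pos by (intro sum_mono) simp
    also have "\<dots> \<le> (1 + r) * S"
      using sum_le_suminf[OF Y_summable, of "{..<n}"] r_pos
      by (simp add: S_def sum_distrib_left[symmetric])
    finally have "u 0 + (\<Sum>k<n. weight r (Y k)) \<le> u 0 + (1 + r) * S" by simp
    moreover have "0 \<le> u 0 + (\<Sum>k<n. weight r (Y k))"
      using u0_nonneg Y_weight_nonneg by (simp add: sum_nonneg)
    ultimately show ?thesis by (rule mult_mono[OF exp_bound _ exp_ge_zero])
  qed
  finally have "u n \<le> exp (suminf c) * (u 0 + (1 + r) * S)" .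
  then have "(1 + 1 / r) * u n \<le> (1 + 1 / r) * (exp (suminf c) * (u 0 + (1 + r) * S))"
    using r_pos by (intro mult_left_mono) auto
  then show "norm (X n) \<le> (1 + 1 / r) * (exp (suminf c) * (u 0 + (1 + r) * S))"
    using norm_le_weight[OF r_pos X_nonneg, of n] unfolding u_def by linarith
qed

end

theorem proposition3p2:
  fixes X Y :: "nat \<Rightarrow> real^2" and M :: "nat \<Rightarrow> real^2^2"
    and \<alpha> :: "nat \<Rightarrow> real" and r :: real
  assumes X_nonneg: "\<And>k i. X k $ i \<ge> 0"
    and Y_nonneg: "\<And>k i. Y k $ i \<ge> 0"
    and rec: "\<And>k. vle (X (Suc k)) (M k *v X k + Y k)"
    and Y_sum: "summable (\<lambda>k. norm (Y k))"
    and r_pos: "r > 0"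
    and alpha_nonneg: "\<And>k. \<alpha> k \<ge> 0"
    and alpha_sum: "summable \<alpha>"
    and M_def: "\<And>k. M k = vector [vector [1, r], vector [\<alpha> k, \<alpha> k]]"
  shows "(\<exists>C. \<forall>a b. a < b \<longrightarrow> norm (prodM M a b) \<le> C)
       \<and> (\<exists>C. \<forall>k. norm (X k) \<le> C)"
proof -
  define c where "c = (\<lambda>k. max 1 r * \<alpha> k)"
  have M_eq: "M k = mat_M r (\<alpha> k)" for k by (simp add: M_def mat_M_def)
  have cone: "vle 0 (M k *v x)" if "vle 0 x" for k x
    using mat_M_cone r_pos alpha_nonneg that by (simp add: M_eq)
  have growth: "weight r (M k *v x) \<le> (1 + c k) * weight r x" if "vle 0 x" for k x
    using weight_mat_M_le r_pos alpha_nonneg that by (simp add: M_eq c_def)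
  have c_nonneg: "0 \<le> c k" for k using alpha_nonneg by (simp add: c_def)
  have c_summable: "summable c" unfolding c_def using alpha_sum by (rule summable_mult)
  note bounds = prodM_bounded[OF r_pos cone growth c_nonneg c_summable]
    perturbed_recursion_bounded[OF r_pos cone growth c_nonneg c_summable]
  have "\<exists>C. \<forall>k. norm (X k) \<le> C"
    using X_nonneg Y_nonneg rec Y_sum by (intro bounds(2)) (auto simp: vle_def)
  moreover obtain C where "\<And>a b. a \<le> b \<Longrightarrow> norm (prodM M a b) \<le> C"
    using bounds(1) by blast
  ultimately show ?thesis by (blast intro: less_imp_le)
qed

end
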